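(* Let $1\ge a>0$. (a) The memory-one strategy $\mathbf p=a\,(1,0,1,0)+(1-a)(1,1,0,0)$ (a mixture of Tit-for-Tat and Repeat) is good, and for every strategy pattern of Y and every associated limit distribution the expected payoffs satisfy $s_Y=s_X$. (b) The memory-one strategy $\mathbf p=a\,(1,0,0,0)+(1-a)(1,1,0,0)$ (a mixture of Grim and Repeat) is good.
   Context: Iterated Prisoner's Dilemma: payoffs $T>R>P>S$ with $2R>T+S$; outcomes of a round are ordered $cc,cd,dc,dd$ (first letter X's play, second Y's; $c$ = cooperate, $d$ = defect); payoff vectors $\mathbf S_X=(R,S,T,P)$, $\mathbf S_Y=(R,T,S,P)$. A memory-one strategy for X is $\mathbf p=(p_1,p_2,p_3,p_4)\in[0,1]^4$, where $p_i$ is the probability that X plays $c$ in the next round given that the current round had the $i$-th outcome. A strategy pattern for Y is an arbitrary (possibly randomized and history-dependent) rule for Y's play in each round. Given initial plays and the rules used, let $\mathbf v^n$ be the probability distribution of the outcome of round $n$; a limit distribution is any limit point $\mathbf v$ of the Cesàro averages $\frac1n\sum_{k=1}^n\mathbf v^k$, and the associated expected payoffs are $s_X=\langle\mathbf v\cdot\mathbf S_X\rangle$, $s_Y=\langle\mathbf v\cdot\mathbf S_Y\rangle$. $\mathbf p$ is agreeable if $p_1=1$. $\mathbf p$ is good if it is agreeable and, for every strategy pattern of Y and every associated limit distribution, $s_Y\ge R$ implies $s_Y=s_X=R$. *)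

theory Defs
  imports Complex_Main
begin

text \<open>Outcomes of a round: (X plays c, Y plays c).  So cc = (True,True), cd = (True,False),
  dc = (False,True), dd = (False,False).\<close>
type_synonym outcome = "bool \<times> bool"

definition memory_one :: "real \<Rightarrow> real \<Rightarrow> real \<Rightarrow> real \<Rightarrow> outcome \<Rightarrow> real" where
  "memory_one p1 p2 p3 p4 = (\<lambda>(x, y). if x then (if y then p1 else p2) else (if y then p3 else p4))"

text \<open>A strategy pattern for Y (behaviour strategy): probability that Y cooperates in the next
  round given the whole history so far (chronological list of outcomes).\<close>
definition play_prob :: "(outcome \<Rightarrow> real) \<Rightarrow> real \<Rightarrow> (outcome list \<Rightarrow> real) \<Rightarrow> outcome list \<Rightarrow> outcome \<Rightarrow> real" where
  "play_prob p x0 q h w =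
     (let px = (if h = [] then x0 else p (last h)); py = q h
      in (if fst w then px else 1 - px) * (if snd w then py else 1 - py))"

definition hist_prob :: "(outcome \<Rightarrow> real) \<Rightarrow> real \<Rightarrow> (outcome list \<Rightarrow> real) \<Rightarrow> outcome list \<Rightarrow> real" where
  "hist_prob p x0 q h = (\<Prod>i<length h. play_prob p x0 q (take i h) (h ! i))"

text \<open>Distribution v^n of the outcome of round n (n \<ge> 1).\<close>
definition round_dist :: "(outcome \<Rightarrow> real) \<Rightarrow> real \<Rightarrow> (outcome list \<Rightarrow> real) \<Rightarrow> nat \<Rightarrow> outcome \<Rightarrow> real" where
  "round_dist p x0 q n w = (\<Sum>h\<in>{h. length h = n \<and> h \<noteq> [] \<and> last h = w}. hist_prob p x0 q h)"

definition cesaro :: "(outcome \<Rightarrow> real) \<Rightarrow> real \<Rightarrow> (outcome list \<Rightarrow> real) \<Rightarrow> nat \<Rightarrow> outcome \<Rightarrow> real" where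
  "cesaro p x0 q n w = (\<Sum>k=1..n. round_dist p x0 q k w) / real n"

definition limit_dist :: "(outcome \<Rightarrow> real) \<Rightarrow> real \<Rightarrow> (outcome list \<Rightarrow> real) \<Rightarrow> (outcome \<Rightarrow> real) \<Rightarrow> bool" where
  "limit_dist p x0 q v \<longleftrightarrow>
     (\<exists>r. strict_mono r \<and> (\<forall>w. (\<lambda>n. cesaro p x0 q (r n) w) \<longlonglongrightarrow> v w))"

definition payoff_X :: "real \<Rightarrow> real \<Rightarrow> real \<Rightarrow> real \<Rightarrow> (outcome \<Rightarrow> real) \<Rightarrow> real" where
  "payoff_X R S T P v = v (True, True) * R + v (True, False) * S + v (False, True) * T + v (False, False) * P"

definition payoff_Y :: "real \<Rightarrow> real \<Rightarrow> real \<Rightarrow> real \<Rightarrow> (outcome \<Rightarrow> real) \<Rightarrow> real" where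
  "payoff_Y R S T P v = v (True, True) * R + v (True, False) * T + v (False, True) * S + v (False, False) * P"

definition valid_pattern :: "(outcome list \<Rightarrow> real) \<Rightarrow> bool" where
  "valid_pattern q \<longleftrightarrow> (\<forall>h. 0 \<le> q h \<and> q h \<le> 1)"

definition agreeable :: "(outcome \<Rightarrow> real) \<Rightarrow> bool" where
  "agreeable p \<longleftrightarrow> p (True, True) = 1"

definition good :: "real \<Rightarrow> real \<Rightarrow> real \<Rightarrow> real \<Rightarrow> (outcome \<Rightarrow> real) \<Rightarrow> bool" where
  "good R S T P p \<longleftrightarrow> agreeable p \<and>
     (\<forall>x0 q v. 0 \<le> x0 \<and> x0 \<le> 1 \<and> valid_pattern q \<and> limit_dist p x0 q v \<longrightarrow>
        (payoff_Y R S T P v \<ge> R \<longrightarrow> payoff_Y R S T P v = R \<and> payoff_X R S T P v = R))"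

end

theory Submission
  imports Defs
begin

text \<open>The key fact is Akin's balance law: for every limit distribution \<open>v\<close> of play against a
  memory-one strategy \<open>p\<close>, the probability that X cooperates is the same in consecutive rounds
  on average, i.e. \<open>\<Sum>w. v w * p w = v cc + v cd\<close>.  It holds because the Cesaro averages of these
  two quantities differ by a telescoping sum of at most one divided by the number of rounds.
  For \<open>p = (1, 1 - a, a, 0)\<close> the law reads \<open>a v dc = a v cd\<close>, so both players earn the same, and
  then \<open>s\<^sub>Y \<ge> R\<close> forces \<open>v cd = v dd = 0\<close> because \<open>2R > T + S\<close> and \<open>R > P\<close>.  For
  \<open>p = (1, 1 - a, 0, 0)\<close> it reads \<open>a v cd = 0\<close>, and \<open>s\<^sub>Y \<ge> R\<close> forces \<open>v dc = v dd = 0\<close>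
  because \<open>R > S\<close> and \<open>R > P\<close>.\<close>

lemma sum_UNIV_outcome:
  "(\<Sum>w\<in>(UNIV::outcome set). f w) = f (True,True) + f (True,False) + f (False,True) + f (False,False)"
proof -
  have outcomes: "(UNIV::outcome set) = {(True,True),(True,False),(False,True),(False,False)}"
    by auto
  show ?thesis by (subst outcomes) (simp add: add.assoc)
qed

lemma finite_histories: "finite {h::outcome list. length h = n}"
  using finite_lists_length_eq[of "UNIV::outcome set" n] by simp

lemma sum_histories_Suc:
  "(\<Sum>h | length h = Suc n. g h) = (\<Sum>h | length h = n. \<Sum>w\<in>UNIV. g (h @ [w :: outcome]))"
proof -
  have snoc_image: "{h::outcome list. length h = Suc n} = (\<lambda>(h,w). h @ [w]) ` ({h. length h = n} \<times> UNIV)"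
  proof (intro set_eqI iffI)
    fix h :: "outcome list" assume "h \<in> {h. length h = Suc n}"
    then have "h \<noteq> []" "length (butlast h) = n" by auto
    then show "h \<in> (\<lambda>(h,w). h @ [w]) ` ({h. length h = n} \<times> UNIV)"
      by (intro image_eqI[of _ _ "(butlast h, last h)"]) auto
  qed auto
  have snoc_inj: "inj_on (\<lambda>(h,w). h @ [w]) ({h::outcome list. length h = n} \<times> UNIV)"
    by (auto simp: inj_on_def)
  show ?thesis
    unfolding snoc_image sum.reindex[OF snoc_inj] sum.cartesian_product by (simp add: case_prod_beta)
qed

lemma hist_prob_snoc: "hist_prob p x0 q (h @ [w]) = hist_prob p x0 q h * play_prob p x0 q h w"
proof -
  have "(\<Prod>i<length h. play_prob p x0 q (take i (h @ [w])) ((h @ [w]) ! i)) = hist_prob p x0 q h"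
    unfolding hist_prob_def by (rule prod.cong) (auto simp: nth_append)
  then show ?thesis by (simp add: hist_prob_def nth_append)
qed

lemma sum_play_prob: "(\<Sum>w\<in>UNIV. play_prob p x0 q h w) = 1"
  unfolding sum_UNIV_outcome play_prob_def Let_def by (simp add: algebra_simps)

lemma play_prob_X_cooperates:
  "play_prob p x0 q h (True,True) + play_prob p x0 q h (True,False) = (if h = [] then x0 else p (last h))"
  unfolding play_prob_def Let_def by (simp add: algebra_simps)

lemma sum_hist_prob: "(\<Sum>h | length h = n. hist_prob p x0 q h) = 1"
proof (induction n)
  case 0
  have "{h::outcome list. length h = 0} = {[]}" by auto
  then show ?case by (simp add: hist_prob_def)
next
  case (Suc n)
  then show ?case
    by (simp add: sum_histories_Suc hist_prob_snoc sum_distrib_left[symmetric] sum_play_prob)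
qed

lemma round_dist_Suc:
  "round_dist p x0 q (Suc n) w = (\<Sum>h | length h = n. hist_prob p x0 q h * play_prob p x0 q h w)"
proof -
  have "{h. length h = Suc n \<and> h \<noteq> [] \<and> last h = w} = {h \<in> {h. length h = Suc n}. last h = w}"
    by auto
  then have "round_dist p x0 q (Suc n) w
      = (\<Sum>h | length h = Suc n. if last h = w then hist_prob p x0 q h else 0)"
    unfolding round_dist_def using sum.inter_filter[OF finite_histories] by simp
  also have "\<dots> = (\<Sum>h | length h = n. \<Sum>w'\<in>UNIV. if w' = w then hist_prob p x0 q (h @ [w']) else 0)"
    by (simp add: sum_histories_Suc)
  finally show ?thesis by (simp add: hist_prob_snoc)
qed

lemma sum_round_dist_Suc: "(\<Sum>w\<in>UNIV. round_dist p x0 q (Suc n) w) = 1"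
  unfolding round_dist_Suc
  by (subst sum.swap) (simp add: sum_distrib_left[symmetric] sum_play_prob sum_hist_prob)

definition coop_prob :: "(outcome \<Rightarrow> real) \<Rightarrow> real \<Rightarrow> (outcome list \<Rightarrow> real) \<Rightarrow> nat \<Rightarrow> real" where
  "coop_prob p x0 q k = round_dist p x0 q k (True,True) + round_dist p x0 q k (True,False)"

lemma coop_prob_Suc_Suc:
  "coop_prob p x0 q (Suc (Suc m)) = (\<Sum>w\<in>UNIV. p w * round_dist p x0 q (Suc m) w)"
proof -
  have "coop_prob p x0 q (Suc (Suc m)) = (\<Sum>h | length h = Suc m. hist_prob p x0 q h * p (last h))"
    unfolding coop_prob_def round_dist_Suc sum.distrib[symmetric] distrib_left[symmetric]
    by (rule sum.cong) (auto simp: play_prob_X_cooperates)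
  also have "\<dots> = (\<Sum>h | length h = m. \<Sum>w\<in>UNIV. p w * (hist_prob p x0 q h * play_prob p x0 q h w))"
    by (simp add: sum_histories_Suc hist_prob_snoc mult_ac)
  also have "\<dots> = (\<Sum>w\<in>UNIV. p w * round_dist p x0 q (Suc m) w)"
    unfolding round_dist_Suc by (subst sum.swap) (simp add: sum_distrib_left)
  finally show ?thesis .
qed

lemma cesaro_balance_defect:
  "(\<Sum>w\<in>UNIV. cesaro p x0 q n w * p w) - (cesaro p x0 q n (True,True) + cesaro p x0 q n (True,False))
    = (coop_prob p x0 q (Suc n) - coop_prob p x0 q 1) / real n"
proof -
  have next_round: "(\<Sum>w\<in>UNIV. cesaro p x0 q n w * p w) = (\<Sum>k=1..n. coop_prob p x0 q (Suc k)) / real n"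
  proof -
    have "(\<Sum>w\<in>UNIV. cesaro p x0 q n w * p w) = (\<Sum>k=1..n. \<Sum>w\<in>UNIV. p w * round_dist p x0 q k w) / real n"
      unfolding cesaro_def
      by (subst sum.swap) (simp add: sum_divide_distrib sum_distrib_left mult.commute)
    also have "(\<Sum>k=1..n. \<Sum>w\<in>UNIV. p w * round_dist p x0 q k w) = (\<Sum>k=1..n. coop_prob p x0 q (Suc k))"
      by (rule sum.cong) (auto simp: coop_prob_Suc_Suc dest!: Suc_le_D)
    finally show ?thesis .
  qed
  have this_round: "cesaro p x0 q n (True,True) + cesaro p x0 q n (True,False)
      = (\<Sum>k=1..n. coop_prob p x0 q k) / real n"
    unfolding cesaro_def coop_prob_def by (simp add: sum.distrib add_divide_distrib)
  have "(\<Sum>k=1..n. coop_prob p x0 q (Suc k)) - (\<Sum>k=1..n. coop_prob p x0 q k)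
      = coop_prob p x0 q (Suc n) - coop_prob p x0 q 1"
    using sum_Suc_diff[of 1 n "coop_prob p x0 q"] by (simp add: sum_subtractf)
  then show ?thesis unfolding next_round this_round by (simp add: diff_divide_distrib[symmetric])
qed

definition outcome_distribution :: "(outcome \<Rightarrow> real) \<Rightarrow> bool" where
  "outcome_distribution v \<longleftrightarrow> (\<forall>w. 0 \<le> v w) \<and> (\<Sum>w\<in>UNIV. v w) = 1"

context
  fixes p :: "outcome \<Rightarrow> real" and x0 :: real and q :: "outcome list \<Rightarrow> real"
  assumes p_prob: "\<And>w. p w \<in> {0..1}" and x0_prob: "x0 \<in> {0..1}" and q_valid: "valid_pattern q"
begin

lemma round_dist_nonneg: "0 \<le> round_dist p x0 q n w"
proof -
  have "0 \<le> play_prob p x0 q h w" for h w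
    using p_prob[of "last h"] x0_prob q_valid
    unfolding play_prob_def valid_pattern_def Let_def by (auto intro!: mult_nonneg_nonneg)
  then show ?thesis
    unfolding round_dist_def hist_prob_def by (intro sum_nonneg prod_nonneg)
qed

lemma coop_prob_Suc_bounds: "coop_prob p x0 q (Suc n) \<in> {0..1}"
  using sum_round_dist_Suc[of p x0 q n] round_dist_nonneg[of "Suc n"]
  unfolding coop_prob_def sum_UNIV_outcome by (smt (verit) atLeastAtMost_iff)

lemma cesaro_nonneg: "0 \<le> cesaro p x0 q n w"
  unfolding cesaro_def by (intro divide_nonneg_nonneg sum_nonneg round_dist_nonneg) auto

lemma sum_cesaro: "n \<ge> 1 \<Longrightarrow> (\<Sum>w\<in>UNIV. cesaro p x0 q n w) = 1"
proof -
  assume "n \<ge> 1"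
  have "(\<Sum>w\<in>UNIV. cesaro p x0 q n w) = (\<Sum>k=1..n. \<Sum>w\<in>UNIV. round_dist p x0 q k w) / real n"
    unfolding cesaro_def by (subst sum.swap) (simp add: sum_divide_distrib)
  also have "(\<Sum>k=1..n. \<Sum>w\<in>UNIV. round_dist p x0 q k w) = (\<Sum>k=1..n. 1)"
    by (rule sum.cong) (auto simp: sum_round_dist_Suc dest!: Suc_le_D)
  finally show ?thesis using \<open>n \<ge> 1\<close> by simp
qed

lemma limit_dist_distribution:
  assumes "limit_dist p x0 q v"
  shows "outcome_distribution v"
proof -
  obtain r where r: "strict_mono r" and lim: "\<And>w. (\<lambda>n. cesaro p x0 q (r n) w) \<longlonglongrightarrow> v w"
    using assms unfolding limit_dist_def by blast
  have "0 \<le> v w" for w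
    by (rule LIMSEQ_le_const[OF lim]) (simp add: cesaro_nonneg)
  moreover have "(\<lambda>n. \<Sum>w\<in>UNIV. cesaro p x0 q (r n) w) \<longlonglongrightarrow> (\<Sum>w\<in>UNIV. v w)"
    by (intro tendsto_sum lim)
  moreover have "\<forall>\<^sub>F n in sequentially. (\<Sum>w\<in>UNIV. cesaro p x0 q (r n) w) = 1"
    using seq_suble[OF r] by (intro eventually_sequentiallyI[of 1] sum_cesaro) (meson le_trans)
  then have "(\<lambda>n. \<Sum>w\<in>UNIV. cesaro p x0 q (r n) w) \<longlonglongrightarrow> 1"
    by (rule tendsto_eventually)
  ultimately show ?thesis
    unfolding outcome_distribution_def using LIMSEQ_unique by blast
qed

lemma limit_dist_balance:
  assumes "limit_dist p x0 q v"
  shows "(\<Sum>w\<in>UNIV. v w * p w) = v (True,True) + v (True,False)"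
proof -
  obtain r where r: "strict_mono r" and lim: "\<And>w. (\<lambda>n. cesaro p x0 q (r n) w) \<longlonglongrightarrow> v w"
    using assms unfolding limit_dist_def by blast
  define defect where "defect n =
    (\<Sum>w\<in>UNIV. cesaro p x0 q n w * p w) - (cesaro p x0 q n (True,True) + cesaro p x0 q n (True,False))" for n
  have "(\<lambda>n. defect (r n)) \<longlonglongrightarrow> (\<Sum>w\<in>UNIV. v w * p w) - (v (True,True) + v (True,False))"
    unfolding defect_def by (intro tendsto_intros lim)
  moreover have "(\<lambda>n. \<bar>defect (r n)\<bar>) \<longlonglongrightarrow> 0"
  proof (rule tendsto_sandwich[OF _ _ tendsto_const])
    have "\<bar>defect n\<bar> \<le> 1 / real n" for n
    proof -
      have "\<bar>coop_prob p x0 q (Suc n) - coop_prob p x0 q 1\<bar> \<le> 1"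
        using coop_prob_Suc_bounds[of n] coop_prob_Suc_bounds[of 0] by auto
      then show ?thesis
        unfolding defect_def cesaro_balance_defect abs_divide by (simp add: divide_right_mono)
    qed
    then show "\<forall>\<^sub>F n in sequentially. \<bar>defect (r n)\<bar> \<le> 1 / real (r n)"
      by simp
    show "\<forall>\<^sub>F n in sequentially. 0 \<le> \<bar>defect (r n)\<bar>"
      by simp
    show "(\<lambda>n. 1 / real (r n)) \<longlonglongrightarrow> 0"
      using LIMSEQ_subseq_LIMSEQ[OF lim_1_over_n r] by (simp add: o_def)
  qed
  ultimately show ?thesis
    unfolding tendsto_rabs_zero_iff using LIMSEQ_unique by fastforce
qed

end

lemma memory_one_simps [simp]:
  "memory_one p1 p2 p3 p4 (True,True) = p1" "memory_one p1 p2 p3 p4 (True,False) = p2"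
  "memory_one p1 p2 p3 p4 (False,True) = p3" "memory_one p1 p2 p3 p4 (False,False) = p4"
  by (simp_all add: memory_one_def)

lemma limit_dist_memory_one_balance:
  assumes "p2 \<in> {0..1}" "p3 \<in> {0..1}" "p4 \<in> {0..1}" "x0 \<in> {0..1}" "valid_pattern q"
    and "limit_dist (memory_one 1 p2 p3 p4) x0 q v"
  shows "v (False,True) * p3 + v (False,False) * p4 = (1 - p2) * v (True,False)"
proof -
  have "\<And>w. memory_one 1 p2 p3 p4 w \<in> {0..1}"
    using assms(1-3) by (auto simp: memory_one_def)
  from limit_dist_balance[OF this assms(4-6)] show ?thesis
    unfolding sum_UNIV_outcome by (simp add: algebra_simps)
qed

lemma outcome_distribution_mutual_cooperation:
  assumes "outcome_distribution v" and "v (True,True) = 1"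
  shows "v (True,False) = 0" "v (False,True) = 0" "v (False,False) = 0"
  using assms unfolding outcome_distribution_def sum_UNIV_outcome
  by (smt (verit))+

lemma goodI_mutual_cooperation:
  assumes "agreeable p" and "\<And>w. p w \<in> {0..1}"
    and coop: "\<And>x0 q v. x0 \<in> {0..1} \<Longrightarrow> valid_pattern q \<Longrightarrow> limit_dist p x0 q v
               \<Longrightarrow> R \<le> payoff_Y R S T P v \<Longrightarrow> v (True,True) = 1"
  shows "good R S T P p"
  unfolding good_def
proof (intro conjI allI impI \<open>agreeable p\<close>)
  fix x0 q v
  assume play: "0 \<le> x0 \<and> x0 \<le> 1 \<and> valid_pattern q \<and> limit_dist p x0 q v"
    and "R \<le> payoff_Y R S T P v"
  then have cc: "v (True,True) = 1" and dist: "outcome_distribution v"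
    using coop limit_dist_distribution[OF assms(2)] by auto
  then show "payoff_Y R S T P v = R" "payoff_X R S T P v = R"
    using outcome_distribution_mutual_cooperation[OF dist cc]
    unfolding payoff_Y_def payoff_X_def by simp_all
qed

lemma nonneg_combination_eq_zero:
  fixes x y c d :: real
  assumes "0 \<le> x" "0 \<le> y" "0 < c" "0 < d" "x * c + y * d \<le> 0"
  shows "x = 0" "y = 0"
proof -
  have "0 \<le> x * c" "0 \<le> y * d" using assms by simp_all
  then have "x * c = 0" "y * d = 0" using assms(5) by linarith+
  then show "x = 0" "y = 0" using assms(3,4) by simp_all
qed

lemma payoff_Y_diff_R:
  assumes "outcome_distribution v"
  shows "payoff_Y R S T P v - R
    = v (True,False) * (T - R) + v (False,True) * (S - R) + v (False,False) * (P - R)"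
proof -
  have "R = (v (True,True) + v (True,False) + v (False,True) + v (False,False)) * R"
    using assms by (simp add: outcome_distribution_def sum_UNIV_outcome)
  then show ?thesis unfolding payoff_Y_def by (simp add: algebra_simps)
qed

lemma mutual_cooperation_if_payoff_Y_ge_R_symmetric:
  assumes "outcome_distribution v" and "v (False,True) = v (True,False)"
    and "T + S < 2 * R" and "P < R" and "R \<le> payoff_Y R S T P v"
  shows "v (True,True) = 1"
proof -
  have "v (True,False) * (2 * R - T - S) + v (False,False) * (R - P) \<le> 0"
    using payoff_Y_diff_R[OF assms(1), of R S T P] assms(2,5) by (simp add: algebra_simps)
  with assms have "v (True,False) = 0" "v (False,False) = 0"
    using nonneg_combination_eq_zero unfolding outcome_distribution_def by (smt (verit))+
  with assms(1,2) show ?thesis by (simp add: outcome_distribution_def sum_UNIV_outcome)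
qed

lemma mutual_cooperation_if_payoff_Y_ge_R_no_cd:
  assumes "outcome_distribution v" and "v (True,False) = 0"
    and "S < R" and "P < R" and "R \<le> payoff_Y R S T P v"
  shows "v (True,True) = 1"
proof -
  have "v (False,True) * (R - S) + v (False,False) * (R - P) \<le> 0"
    using payoff_Y_diff_R[OF assms(1), of R S T P] assms(2,5) by (simp add: algebra_simps)
  with assms have "v (False,True) = 0" "v (False,False) = 0"
    using nonneg_combination_eq_zero unfolding outcome_distribution_def by (smt (verit))+
  with assms(1,2) show ?thesis by (simp add: outcome_distribution_def sum_UNIV_outcome)
qed

theorem corollary1p4:
  fixes R S T P a :: real
  assumes "T > R" and "R > P" and "P > S" and "2 * R > T + S"
    and "0 < a" and "a \<le> 1"
  shows "good R S T P (memory_one 1 (1 - a) a 0)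
       \<and> (\<forall>x0 q v. 0 \<le> x0 \<and> x0 \<le> 1 \<and> valid_pattern q \<and> limit_dist (memory_one 1 (1 - a) a 0) x0 q v
              \<longrightarrow> payoff_Y R S T P v = payoff_X R S T P v)
       \<and> good R S T P (memory_one 1 (1 - a) 0 0)"
proof -
  have a: "a \<in> {0..1}" "1 - a \<in> {0..1}" using assms(5,6) by auto
  have tft_balanced: "v (False,True) = v (True,False)"
    if "x0 \<in> {0..1}" "valid_pattern q" "limit_dist (memory_one 1 (1 - a) a 0) x0 q v" for x0 q v
    using limit_dist_memory_one_balance[OF a(2,1) _ that] assms(5) by simp
  have grim_no_cd: "v (True,False) = 0"
    if "x0 \<in> {0..1}" "valid_pattern q" "limit_dist (memory_one 1 (1 - a) 0 0) x0 q v" for x0 q v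
    using limit_dist_memory_one_balance[OF a(2) _ _ that] assms(5) by simp
  have prob: "\<And>w. memory_one 1 (1 - a) a 0 w \<in> {0..1}" "\<And>w. memory_one 1 (1 - a) 0 0 w \<in> {0..1}"
    using a by (auto simp: memory_one_def)
  have "good R S T P (memory_one 1 (1 - a) a 0)"
  proof (rule goodI_mutual_cooperation[OF _ prob(1)])
    fix x0 q v assume play: "x0 \<in> {0..1}" "valid_pattern q" "limit_dist (memory_one 1 (1 - a) a 0) x0 q v"
    show "R \<le> payoff_Y R S T P v \<Longrightarrow> v (True,True) = 1"
      using mutual_cooperation_if_payoff_Y_ge_R_symmetric[OF limit_dist_distribution[OF prob(1) play]
          tft_balanced[OF play]] assms by simp
  qed (simp add: agreeable_def)
  moreover have "good R S T P (memory_one 1 (1 - a) 0 0)"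
  proof (rule goodI_mutual_cooperation[OF _ prob(2)])
    fix x0 q v assume play: "x0 \<in> {0..1}" "valid_pattern q" "limit_dist (memory_one 1 (1 - a) 0 0) x0 q v"
    show "R \<le> payoff_Y R S T P v \<Longrightarrow> v (True,True) = 1"
      using mutual_cooperation_if_payoff_Y_ge_R_no_cd[OF limit_dist_distribution[OF prob(2) play]
          grim_no_cd[OF play] less_trans[OF assms(3,2)] assms(2)] .
  qed (simp add: agreeable_def)
  moreover have "payoff_Y R S T P v = payoff_X R S T P v"
    if "0 \<le> x0 \<and> x0 \<le> 1 \<and> valid_pattern q \<and> limit_dist (memory_one 1 (1 - a) a 0) x0 q v" for x0 q v
    using tft_balanced[of x0 q v] that unfolding payoff_X_def payoff_Y_def by simp
  ultimately show ?thesis by blast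
qed

end
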